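(* Let $V$ be a finite nonempty set and $f:\{0,1\}^V\to\{0,1\}^V$ an and-net. (1) Every subnetwork of $f$ has a unique fixed point if and only if every chordless cycle of $G(f)$ has a delocalizing vertex. (2) Every subnetwork of $f$ has at most one fixed point if and only if every chordless positive cycle of $G(f)$ has a delocalizing vertex.
   Context: For nonempty $I\subseteq V$ and $z\in\{0,1\}^{V\setminus I}$, the subnetwork of $f$ induced by $z$ is $h:\{0,1\}^I\to\{0,1\}^I$ with $h(x|_I)=f(x)|_I$ for all $x$ whose restriction to $V\setminus I$ is $z$ ($f$ is a subnetwork of itself). For $x^{j\alpha}$ the point equal to $x$ except its $j$-component is $\alpha$, the global interaction graph $G(f)$ is the signed digraph on $V$ with a positive (resp. negative) arc from $j$ to $i$ iff $f_i(x^{j1})-f_i(x^{j0})=1$ (resp. $=-1$) for at least one $x$. $f$ is an and-net if $G(f)$ has at most one arc from $j$ to $i$ for all $i,j$ and for every $i$ and $x$: $f_i(x)=1$ iff $G(f)$ has no positive arc $j\to i$ with $x_j=0$ and no negative arc $j\to i$ with $x_j=1$. A cycle is a subgraph whose underlying unsigned digraph is a directed cycle (loops are cycles of length 1); positive if it has an even number of negative arcs; chordless if its underlying unsigned digraph is an induced subgraph of that of $G(f)$. A vertex $v$ (possibly on $C$) is a delocalizing vertex of a cycle $C$ if $G(f)$ has a positive arc from $v$ to a vertex of $C$ and a negative arc from $v$ to a different vertex of $C$. *)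

theory Defs
  imports "HOL-Library.FuncSet"
begin

text \<open>The vertex set V is a finite type 'v (types are nonempty).
  Configurations in {0,1}^V are functions 'v \<Rightarrow> bool (True = 1).\<close>

type_synonym 'v bnet = "('v \<Rightarrow> bool) \<Rightarrow> ('v \<Rightarrow> bool)"

definition pos_arc :: "'v bnet \<Rightarrow> 'v \<Rightarrow> 'v \<Rightarrow> bool" where
  "pos_arc f j i \<longleftrightarrow> (\<exists>x. f (x(j := True)) i \<and> \<not> f (x(j := False)) i)"

definition neg_arc :: "'v bnet \<Rightarrow> 'v \<Rightarrow> 'v \<Rightarrow> bool" where
  "neg_arc f j i \<longleftrightarrow> (\<exists>x. \<not> f (x(j := True)) i \<and> f (x(j := False)) i)"

definition sarc :: "'v bnet \<Rightarrow> bool \<Rightarrow> 'v \<Rightarrow> 'v \<Rightarrow> bool" where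
  "sarc f s j i \<longleftrightarrow> (if s then pos_arc f j i else neg_arc f j i)"

definition any_arc :: "'v bnet \<Rightarrow> 'v \<Rightarrow> 'v \<Rightarrow> bool" where
  "any_arc f j i \<longleftrightarrow> pos_arc f j i \<or> neg_arc f j i"

definition and_net :: "'v bnet \<Rightarrow> bool" where
  "and_net f \<longleftrightarrow>
     (\<forall>i j. \<not> (pos_arc f j i \<and> neg_arc f j i)) \<and>
     (\<forall>i x. f x i \<longleftrightarrow>
        \<not> (\<exists>j. pos_arc f j i \<and> \<not> x j) \<and> \<not> (\<exists>j. neg_arc f j i \<and> x j))"

text \<open>Subnetwork induced by I and z: points of {0,1}^I are the extensional
  functions in PiE I (\<lambda>_. UNIV); only the values of z on V - I matter.\<close>
definition subnet :: "'v bnet \<Rightarrow> 'v set \<Rightarrow> ('v \<Rightarrow> bool) \<Rightarrow> ('v \<Rightarrow> bool) \<Rightarrow> ('v \<Rightarrow> bool)" where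
  "subnet f I z y = restrict (f (\<lambda>j. if j \<in> I then y j else z j)) I"

definition subnet_fixpoints :: "'v bnet \<Rightarrow> 'v set \<Rightarrow> ('v \<Rightarrow> bool) \<Rightarrow> ('v \<Rightarrow> bool) set" where
  "subnet_fixpoints f I z = {y \<in> I \<rightarrow>\<^sub>E (UNIV :: bool set). subnet f I z y = y}"

definition is_cycle :: "'v bnet \<Rightarrow> 'v list \<Rightarrow> bool list \<Rightarrow> bool" where
  "is_cycle f vs ss \<longleftrightarrow> vs \<noteq> [] \<and> distinct vs \<and> length ss = length vs \<and>
     (\<forall>t < length vs. sarc f (ss ! t) (vs ! t) (vs ! ((t + 1) mod length vs)))"

definition positive_cycle :: "bool list \<Rightarrow> bool" where
  "positive_cycle ss \<longleftrightarrow> even (length (filter Not ss))"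

definition chordless :: "'v bnet \<Rightarrow> 'v list \<Rightarrow> bool" where
  "chordless f vs \<longleftrightarrow>
     (\<forall>a < length vs. \<forall>b < length vs.
        any_arc f (vs ! a) (vs ! b) \<longrightarrow> b = (a + 1) mod length vs)"

definition delocalizing :: "'v bnet \<Rightarrow> 'v list \<Rightarrow> 'v \<Rightarrow> bool" where
  "delocalizing f vs v \<longleftrightarrow>
     (\<exists>a \<in> set vs. \<exists>b \<in> set vs. a \<noteq> b \<and> pos_arc f v a \<and> neg_arc f v b)"

end

theory Submission
  imports Defs "HOL-Combinatorics.Orbits"
begin

text \<open>If a chordless cycle has no delocalizing vertex, every vertex outside it can be
  fixed so that all its arcs into the cycle are satisfied. The subnetwork on the cycle then
  behaves like the cycle itself: each vertex copies or negates its predecessor. Its fixed points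
  are therefore closed under complementation, and a positive cycle has one.

  Two distinct fixed points of a subnetwork minimal for this property differ on all
  of it, and a trap-set argument shows that every vertex then has exactly one in-neighbour inside;
  following in-neighbours gives a chordless cycle without delocalizing vertex, positive because
  the signs of its arcs are read off either fixed point. A subnetwork minimal without fixed point
  (when no subnetwork has two) is treated likewise: for each vertex v there are two
  configurations, complementary on the subnetwork, fixed except at v, and comparing these
  configurations for different v again forces unique in-neighbours.\<close>

section \<open>And-nets\<close>

lemma and_net_eval:
  assumes "and_net f"
  shows "f x i \<longleftrightarrow> (\<forall>j. pos_arc f j i \<longrightarrow> x j) \<and> (\<forall>j. neg_arc f j i \<longrightarrow> \<not> x j)"
proof -
  have "f x i \<longleftrightarrow> \<not> (\<exists>j. pos_arc f j i \<and> \<not> x j) \<and> \<not> (\<exists>j. neg_arc f j i \<and> x j)"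
    using assms unfolding and_net_def by (elim conjE allE)
  then show ?thesis by simp
qed

lemma and_net_not_pos_and_neg: "and_net f \<Longrightarrow> \<not> (pos_arc f j i \<and> neg_arc f j i)"
  unfolding and_net_def by (elim conjE allE)

lemma and_net_cong:
  assumes "and_net f" and "\<And>j. any_arc f j i \<Longrightarrow> x j = y j"
  shows "f x i = f y i"
proof -
  have "\<forall>j. pos_arc f j i \<longrightarrow> x j = y j" "\<forall>j. neg_arc f j i \<longrightarrow> x j = y j"
    using assms(2) unfolding any_arc_def by blast+
  then have "((\<forall>j. pos_arc f j i \<longrightarrow> x j) \<and> (\<forall>j. neg_arc f j i \<longrightarrow> \<not> x j)) =
             ((\<forall>j. pos_arc f j i \<longrightarrow> y j) \<and> (\<forall>j. neg_arc f j i \<longrightarrow> \<not> y j))"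
    by metis
  then show ?thesis using and_net_eval[OF assms(1), of x i] and_net_eval[OF assms(1), of y i] by simp
qed

lemma and_net_differ_in_neighbour:
  assumes "and_net f" and "f x i \<noteq> f y i"
  obtains j where "any_arc f j i" and "x j \<noteq> y j"
proof -
  have "\<exists>j. any_arc f j i \<and> x j \<noteq> y j"
  proof (rule ccontr)
    assume none: "\<nexists>j. any_arc f j i \<and> x j \<noteq> y j"
    have "f x i = f y i" by (rule and_net_cong[OF assms(1)]) (use none in blast)
    then show False using assms(2) by simp
  qed
  then show thesis using that by blast
qed

lemma and_net_arc_sign:
  assumes an: "and_net f" and "f x i \<noteq> f y i" and "x j \<noteq> y j"
  shows "(pos_arc f j i \<longrightarrow> x j = f x i) \<and> (neg_arc f j i \<longrightarrow> x j \<noteq> f x i)"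
proof (cases "f x i")
  case True
  then show ?thesis using and_net_eval[OF an, of x i] by auto
next
  case False
  then have "f y i" using assms(2) by simp
  then show ?thesis using False assms(3) and_net_eval[OF an, of y i] by auto
qed

section \<open>Fixed points of subnetworks\<close>

definition fixed_on :: "'v bnet \<Rightarrow> 'v set \<Rightarrow> ('v \<Rightarrow> bool) \<Rightarrow> bool" where
  "fixed_on f I x \<longleftrightarrow> (\<forall>i\<in>I. f x i = x i)"

text \<open>The restrictions of x and y to I are two distinct fixed points of the subnetwork on I induced
  by their common restriction to V - I.\<close>
definition fixpoint_pair :: "'v bnet \<Rightarrow> 'v set \<Rightarrow> ('v \<Rightarrow> bool) \<Rightarrow> ('v \<Rightarrow> bool) \<Rightarrow> bool" where
  "fixpoint_pair f I x y \<longleftrightarrow>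
     fixed_on f I x \<and> fixed_on f I y \<and> (\<forall>j. j \<notin> I \<longrightarrow> x j = y j) \<and> (\<exists>i\<in>I. x i \<noteq> y i)"

lemma fixed_on_subset: "fixed_on f I x \<Longrightarrow> J \<subseteq> I \<Longrightarrow> fixed_on f J x"
  unfolding fixed_on_def by blast

lemma subnet_fixpoints_iff:
  "y \<in> subnet_fixpoints f I z \<longleftrightarrow>
     y \<in> I \<rightarrow>\<^sub>E (UNIV :: bool set) \<and> fixed_on f I (\<lambda>j. if j \<in> I then y j else z j)"
proof (cases "y \<in> I \<rightarrow>\<^sub>E (UNIV :: bool set)")
  case True
  have "restrict g I = y \<longleftrightarrow> (\<forall>i\<in>I. g i = y i)" for g :: "_ \<Rightarrow> bool"
  proof
    show "restrict g I = y \<Longrightarrow> \<forall>i\<in>I. g i = y i" by auto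
    show "\<forall>i\<in>I. g i = y i \<Longrightarrow> restrict g I = y"
      by (rule PiE_ext[OF _ True]) (simp_all add: restrict_PiE_iff)
  qed
  then show ?thesis using True by (simp add: subnet_fixpoints_def subnet_def fixed_on_def)
next
  case False
  then show ?thesis by (simp add: subnet_fixpoints_def)
qed

lemma restrict_in_subnet_fixpoints:
  assumes "fixed_on f I x" and "\<forall>j. j \<notin> I \<longrightarrow> x j = z j"
  shows "restrict x I \<in> subnet_fixpoints f I z"
proof -
  have "(\<lambda>j. if j \<in> I then restrict x I j else z j) = x" using assms(2) by auto
  then show ?thesis using assms(1) by (simp add: subnet_fixpoints_iff)
qed

lemma at_most_one_subnet_fixpoint_iff_no_pair:
  "(\<forall>I z. I \<noteq> {} \<longrightarrow>
      (\<forall>y1 \<in> subnet_fixpoints f I z. \<forall>y2 \<in> subnet_fixpoints f I z. y1 = y2))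
   \<longleftrightarrow> (\<forall>I x y. \<not> fixpoint_pair f I x y)"
proof
  assume uniq: "\<forall>I z. I \<noteq> {} \<longrightarrow>
      (\<forall>y1 \<in> subnet_fixpoints f I z. \<forall>y2 \<in> subnet_fixpoints f I z. y1 = y2)"
  show "\<forall>I x y. \<not> fixpoint_pair f I x y"
  proof (intro allI notI)
    fix I x y assume pair: "fixpoint_pair f I x y"
    then obtain i where i: "i \<in> I" "x i \<noteq> y i" unfolding fixpoint_pair_def by blast
    have "restrict x I \<in> subnet_fixpoints f I x" "restrict y I \<in> subnet_fixpoints f I x"
      using pair by (auto simp: fixpoint_pair_def intro!: restrict_in_subnet_fixpoints)
    then have "restrict x I = restrict y I" using uniq i(1) by blast
    then show False using i by (metis restrict_apply')
  qed
next
  assume no_pair: "\<forall>I x y. \<not> fixpoint_pair f I x y"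
  show "\<forall>I z. I \<noteq> {} \<longrightarrow>
      (\<forall>y1 \<in> subnet_fixpoints f I z. \<forall>y2 \<in> subnet_fixpoints f I z. y1 = y2)"
  proof (intro allI impI ballI)
    fix I z y1 y2 assume "y1 \<in> subnet_fixpoints f I z" "y2 \<in> subnet_fixpoints f I z"
    then have ext: "y1 \<in> I \<rightarrow>\<^sub>E UNIV" "y2 \<in> I \<rightarrow>\<^sub>E UNIV"
      and fixed: "fixed_on f I (\<lambda>j. if j \<in> I then y1 j else z j)"
        "fixed_on f I (\<lambda>j. if j \<in> I then y2 j else z j)"
      by (simp_all add: subnet_fixpoints_iff)
    show "y1 = y2"
    proof (rule PiE_ext[OF ext], rule ccontr)
      fix i assume "i \<in> I" "y1 i \<noteq> y2 i"
      then have "fixpoint_pair f I (\<lambda>j. if j \<in> I then y1 j else z j) (\<lambda>j. if j \<in> I then y2 j else z j)"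
        using fixed unfolding fixpoint_pair_def by auto
      then show False using no_pair by blast
    qed
  qed
qed

section \<open>Cycles\<close>

lemma succ_mod_eq: "t < k \<Longrightarrow> (t + 1) mod (k::nat) = (if t + 1 = k then 0 else t + 1)"
  by auto

lemma succ_mod_inj: "s < k \<Longrightarrow> t < k \<Longrightarrow> (s + 1) mod (k::nat) = (t + 1) mod k \<Longrightarrow> s = t"
  using succ_mod_eq[of s k] succ_mod_eq[of t k] by (auto split: if_splits)

lemma pred_mod_exists: "y < (k::nat) \<Longrightarrow> \<exists>t<k. (t + 1) mod k = y"
  by (cases y) (auto intro: exI[of _ "k - 1"] exI[of _ "y - 1"])

lemma even_negatives_take_Suc:
  assumes "u < length ss"
  shows "even (length (filter Not (take (Suc u) ss))) \<longleftrightarrow>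
           (even (length (filter Not (take u ss))) \<longleftrightarrow> ss ! u)"
  using assms by (cases "ss ! u") (simp_all add: take_Suc_conv_app_nth)

lemma positive_cycle_if_signs_follow_labelling:
  assumes cyc: "is_cycle f vs ss"
    and signs: "\<And>t. t < length vs \<Longrightarrow> ss ! t \<longleftrightarrow> (x (vs ! t) \<longleftrightarrow> x (vs ! ((t + 1) mod length vs)))"
  shows "positive_cycle ss"
proof -
  define k where "k = length vs"
  define h where "h t = x (vs ! (t mod k))" for t
  have k: "length ss = k" "0 < k" using cyc by (auto simp: is_cycle_def k_def)
  have "even (length (filter Not (take n ss))) \<longleftrightarrow> (h 0 \<longleftrightarrow> h n)" if "n \<le> k" for n
    using that
  proof (induction n)
    case 0
    then show ?case by simp
  next
    case (Suc n)
    then have "ss ! n \<longleftrightarrow> (h n \<longleftrightarrow> h (Suc n))" using signs[of n] by (simp add: h_def k_def)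
    then show ?case using Suc even_negatives_take_Suc[of n ss] k by auto
  qed
  from this[of k] show ?thesis using k by (simp add: positive_cycle_def h_def)
qed

lemma funpow_in_invariant: "p ` I \<subseteq> I \<Longrightarrow> x \<in> I \<Longrightarrow> (p ^^ n) x \<in> I"
  by (induction n) auto

lemma periodic_point_exists:
  fixes p :: "'a \<Rightarrow> 'a"
  assumes "finite I" "a \<in> I" "p ` I \<subseteq> I"
  obtains b where "b \<in> I" "b \<in> orbit p b"
proof -
  have "\<not> inj (\<lambda>n. (p ^^ n) a)"
  proof
    assume "inj (\<lambda>n. (p ^^ n) a)"
    moreover have "finite (range (\<lambda>n. (p ^^ n) a))"
      using funpow_in_invariant[OF assms(3,2)] assms(1) by (auto intro: finite_subset)
    ultimately show False using finite_imageD infinite_UNIV_nat by blast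
  qed
  then obtain i j where ij: "i < j" "(p ^^ i) a = (p ^^ j) a"
    unfolding inj_def by (metis linorder_neqE_nat)
  define b where "b = (p ^^ i) a"
  have "(p ^^ (j - i)) b = (p ^^ (j - i + i)) a" by (simp add: b_def funpow_add)
  also have "\<dots> = b" using ij by (simp add: b_def)
  finally have "b = (p ^^ (j - i)) b \<and> 0 < j - i" using ij(1) by simp
  then have "b \<in> orbit p b" unfolding orbit_altdef by blast
  moreover have "b \<in> I" using funpow_in_invariant[OF assms(3,2)] by (simp add: b_def)
  ultimately show thesis using that by blast
qed

lemma functional_graph_cycle:
  fixes p :: "'a \<Rightarrow> 'a"
  assumes "finite I" "a \<in> I" "p ` I \<subseteq> I"
  obtains vs where "vs \<noteq> []" "distinct vs" "set vs \<subseteq> I"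
    "\<And>t. t < length vs \<Longrightarrow> p (vs ! ((t + 1) mod length vs)) = vs ! t"
proof -
  obtain b where b: "b \<in> I" and orb: "b \<in> orbit p b" using periodic_point_exists[OF assms] by blast
  define m where "m = funpow_dist1 p b b"
  text \<open>The orbit of b, listed backwards so that p maps each entry to its predecessor.\<close>
  define vs where "vs = rev (map (\<lambda>t. (p ^^ t) b) [0..<m])"
  have vs_nth: "vs ! t = (p ^^ (m - Suc t)) b" if "t < m" for t
    using that by (simp add: vs_def rev_nth)
  have period: "(p ^^ m) b = b" using funpow_dist1_prop[OF orb] by (simp add: m_def)
  show thesis
  proof
    show "vs \<noteq> []" by (simp add: vs_def m_def)
    have "inj_on (\<lambda>t. (p ^^ t) b) {0..<m}" using inj_on_funpow_dist1[OF orb] by (simp only: m_def)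
    then show "distinct vs" by (simp add: vs_def distinct_map)
    show "set vs \<subseteq> I" using funpow_in_invariant[OF assms(3) b] by (auto simp: vs_def)
    fix t assume "t < length vs"
    then have t: "t < m" by (simp add: vs_def)
    show "p (vs ! ((t + 1) mod length vs)) = vs ! t"
    proof (cases "t + 1 = m")
      case True
      obtain m' where m': "m = Suc m'" using t by (cases m) auto
      have "p (vs ! ((t + 1) mod length vs)) = p ((p ^^ m') b)"
        using True vs_nth[of 0] m' by (simp add: vs_def)
      also have "\<dots> = (p ^^ m) b" using m' by simp
      finally show ?thesis using period vs_nth[OF t] True by simp
    next
      case False
      then have "t + 1 < m" using t by simp
      then have "(t + 1) mod length vs = t + 1" by (simp add: vs_def)
      then have "p (vs ! ((t + 1) mod length vs)) = (p ^^ Suc (m - Suc (Suc t))) b"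
        using vs_nth[of "t + 1"] \<open>t + 1 < m\<close> by simp
      also have "Suc (m - Suc (Suc t)) = m - Suc t" using \<open>t + 1 < m\<close> by simp
      finally show ?thesis using vs_nth[OF t] by simp
    qed
  qed
qed

lemma on_chordless_cycle_not_delocalizing:
  assumes chl: "chordless f vs" and v: "v \<in> set vs"
  shows "\<not> delocalizing f vs v"
proof
  assume "delocalizing f vs v"
  then obtain a b where ab: "a \<in> set vs" "b \<in> set vs" "a \<noteq> b" "pos_arc f v a" "neg_arc f v b"
    unfolding delocalizing_def by blast
  obtain c where c: "c < length vs" "v = vs ! c" using v by (metis in_set_conv_nth)
  have succ: "u = vs ! ((c + 1) mod length vs)" if u: "u \<in> set vs" "any_arc f v u" for u
  proof -
    obtain y where "y < length vs" "u = vs ! y" using u(1) by (metis in_set_conv_nth)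
    then show ?thesis using chl[unfolded chordless_def, rule_format, of c y] c u(2) by simp
  qed
  have "any_arc f v a" "any_arc f v b" using ab(4,5) by (simp_all add: any_arc_def)
  then have "a = vs ! ((c + 1) mod length vs)" "b = vs ! ((c + 1) mod length vs)"
    using succ ab(1,2) by blast+
  then show False using ab(3) by simp
qed

lemma chordless_cycle_of_unique_in_neighbours:
  fixes I :: "'v::finite set"
  assumes "I \<noteq> {}"
    and ex: "\<And>i. i \<in> I \<Longrightarrow> \<exists>j\<in>I. any_arc f j i"
    and un: "\<And>i j1 j2. i \<in> I \<Longrightarrow> j1 \<in> I \<Longrightarrow> j2 \<in> I \<Longrightarrow> any_arc f j1 i \<Longrightarrow> any_arc f j2 i \<Longrightarrow> j1 = j2"
    and out: "\<And>w a b. w \<notin> I \<Longrightarrow> a \<in> I \<Longrightarrow> b \<in> I \<Longrightarrow> pos_arc f w a \<Longrightarrow> neg_arc f w b \<Longrightarrow> False"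
  obtains vs ss where "is_cycle f vs ss" "chordless f vs" "set vs \<subseteq> I" "\<forall>v. \<not> delocalizing f vs v"
proof -
  define pred where "pred i = (THE j. j \<in> I \<and> any_arc f j i)" for i
  have pred: "pred i \<in> I \<and> any_arc f (pred i) i" if "i \<in> I" for i
  proof -
    have "\<exists>!j. j \<in> I \<and> any_arc f j i" using ex[OF that] un[OF that] by blast
    then show ?thesis unfolding pred_def by (rule theI')
  qed
  have pred_unique: "j = pred i" if "i \<in> I" "j \<in> I" "any_arc f j i" for i j
    using un[of i j "pred i"] pred[of i] that by blast
  obtain a where a: "a \<in> I" using assms(1) by blast
  have "pred ` I \<subseteq> I" using pred by blast
  then obtain vs where vs: "vs \<noteq> []" "distinct vs" "set vs \<subseteq> I"
    and vs_pred: "\<And>t. t < length vs \<Longrightarrow> pred (vs ! ((t + 1) mod length vs)) = vs ! t"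
    using functional_graph_cycle[OF finite a] by blast
  define k where "k = length vs"
  define ss where "ss = map (\<lambda>t. pos_arc f (vs ! t) (vs ! ((t + 1) mod k))) [0..<k]"
  have k: "0 < k" using vs(1) by (simp add: k_def)
  have vsI: "vs ! t \<in> I" if "t < k" for t using vs(3) that by (auto simp: k_def)
  have arc: "any_arc f (vs ! t) (vs ! ((t + 1) mod k))" if "t < k" for t
    using pred[OF vsI[of "(t + 1) mod k"]] vs_pred[of t] that k by (simp add: k_def)
  have cyc: "is_cycle f vs ss"
    unfolding is_cycle_def
  proof (intro conjI allI impI)
    show "vs \<noteq> []" "distinct vs" "length ss = length vs" using vs by (simp_all add: ss_def k_def)
    fix t assume "t < length vs"
    then show "sarc f (ss ! t) (vs ! t) (vs ! ((t + 1) mod length vs))"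
      using arc[of t] by (auto simp: ss_def k_def sarc_def any_arc_def)
  qed
  have chl: "chordless f vs"
    unfolding chordless_def
  proof (intro allI impI)
    fix a b assume ab: "a < length vs" "b < length vs" "any_arc f (vs ! a) (vs ! b)"
    obtain t where t: "t < k" "(t + 1) mod k = b" using pred_mod_exists[of b k] ab(2) by (auto simp: k_def)
    have "vs ! a = pred (vs ! b)" by (rule pred_unique) (use vsI ab in \<open>auto simp: k_def\<close>)
    also have "\<dots> = vs ! t" using vs_pred[of t] t by (simp add: k_def)
    finally have "a = t" using vs(2) ab(1) t(1) by (simp add: nth_eq_iff_index_eq k_def)
    then show "b = (a + 1) mod length vs" using t by (simp add: k_def)
  qed
  have pred_vs: "pred u \<in> set vs" if u: "u \<in> set vs" for u
  proof -
    obtain y where y: "y < k" "u = vs ! y" using u by (metis in_set_conv_nth k_def)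
    obtain t where "t < k" "(t + 1) mod k = y" using pred_mod_exists[OF y(1)] by blast
    then show ?thesis using vs_pred[of t] y by (simp add: k_def)
  qed
  have "\<not> delocalizing f vs v" for v
  proof (cases "v \<in> I")
    case False
    then show ?thesis using out vs(3) unfolding delocalizing_def by blast
  next
    case True
    show ?thesis
    proof
      assume "delocalizing f vs v"
      then obtain a where a: "a \<in> set vs" "pos_arc f v a" unfolding delocalizing_def by blast
      have "v = pred a" by (rule pred_unique) (use True a vs(3) in \<open>auto simp: any_arc_def\<close>)
      then have "v \<in> set vs" using pred_vs[OF a(1)] by simp
      then show False using on_chordless_cycle_not_delocalizing[OF chl] \<open>delocalizing f vs v\<close> by blast
    qed
  qed
  then show thesis using that cyc chl vs(3) by blast
qed

section \<open>Chordless cycles without delocalizing vertex\<close>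

text \<open>When the cycle has no delocalizing vertex, this context satisfies every arc from outside into
  the cycle.\<close>
definition cycle_context :: "'v bnet \<Rightarrow> 'v list \<Rightarrow> 'v \<Rightarrow> bool" where
  "cycle_context f vs w \<longleftrightarrow> (\<exists>a\<in>set vs. pos_arc f w a)"

lemma cycle_step:
  assumes an: "and_net f" and cyc: "is_cycle f vs ss" and chl: "chordless f vs"
    and nd: "\<forall>v. \<not> delocalizing f vs v"
    and xo: "\<forall>j. j \<notin> set vs \<longrightarrow> x j = cycle_context f vs j"
    and t: "t < length vs"
  shows "f x (vs ! ((t + 1) mod length vs)) \<longleftrightarrow> (x (vs ! t) \<longleftrightarrow> ss ! t)"
proof -
  define i where "i = vs ! ((t + 1) mod length vs)"
  have len: "0 < length vs" using t by linarith
  then have i: "i \<in> set vs" by (simp add: i_def)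
  have arc: "sarc f (ss ! t) (vs ! t) i" using cyc t by (simp add: is_cycle_def i_def)
  have literal: "(pos_arc f j i \<longrightarrow> x j) \<and> (neg_arc f j i \<longrightarrow> \<not> x j)" if j: "j \<noteq> vs ! t" for j
  proof (cases "j \<in> set vs")
    case True
    then obtain s where s: "s < length vs" "j = vs ! s" by (metis in_set_conv_nth)
    have "\<not> any_arc f j i"
    proof
      assume "any_arc f j i"
      then have "(t + 1) mod length vs = (s + 1) mod length vs"
        using chl[unfolded chordless_def, rule_format, of s "(t + 1) mod length vs"] s len
        by (simp add: i_def)
      then show False using succ_mod_inj[of s "length vs" t] s t j by simp
    qed
    then show ?thesis by (simp add: any_arc_def)
  next
    case False
    have "\<not> x j" if neg: "neg_arc f j i"
    proof
      assume "x j"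
      then obtain a where a: "a \<in> set vs" "pos_arc f j a"
        using xo False by (auto simp: cycle_context_def)
      then have "a \<noteq> i" using and_net_not_pos_and_neg[OF an] neg by blast
      then show False using nd a i neg by (auto simp: delocalizing_def)
    qed
    moreover have "x j" if "pos_arc f j i" using xo False i that by (auto simp: cycle_context_def)
    ultimately show ?thesis by blast
  qed
  have "(\<forall>j. pos_arc f j i \<longrightarrow> x j) \<and> (\<forall>j. neg_arc f j i \<longrightarrow> \<not> x j) \<longleftrightarrow>
        (pos_arc f (vs ! t) i \<longrightarrow> x (vs ! t)) \<and> (neg_arc f (vs ! t) i \<longrightarrow> \<not> x (vs ! t))"
    (is "?all \<longleftrightarrow> ?pred")
  proof
    assume ?pred
    show ?all
    proof (intro conjI allI impI)
      fix j assume "pos_arc f j i"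
      then show "x j" using \<open>?pred\<close> literal[of j] by (cases "j = vs ! t") auto
    next
      fix j assume "neg_arc f j i"
      then show "\<not> x j" using \<open>?pred\<close> literal[of j] by (cases "j = vs ! t") auto
    qed
  qed blast
  then have "f x i \<longleftrightarrow> (pos_arc f (vs ! t) i \<longrightarrow> x (vs ! t)) \<and> (neg_arc f (vs ! t) i \<longrightarrow> \<not> x (vs ! t))"
    using and_net_eval[OF an, of x i] by simp
  then show ?thesis
    using arc and_net_not_pos_and_neg[OF an, of "vs ! t" i]
    by (cases "ss ! t") (auto simp: sarc_def i_def)
qed

lemma positive_cycle_fixpoint:
  assumes an: "and_net f" and cyc: "is_cycle f vs ss" and chl: "chordless f vs"
    and nd: "\<forall>v. \<not> delocalizing f vs v" and pos: "positive_cycle ss"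
  obtains x where "fixed_on f (set vs) x" "\<forall>j. j \<notin> set vs \<longrightarrow> x j = cycle_context f vs j"
proof -
  define k where "k = length vs"
  have k: "length ss = k" "0 < k" "distinct vs" using cyc by (auto simp: is_cycle_def k_def)
  define Q where "Q t \<longleftrightarrow> even (length (filter Not (take t ss)))" for t
  define x where "x j = (if j \<in> set vs then \<exists>s<k. vs ! s = j \<and> Q s else cycle_context f vs j)" for j
  have xo: "\<forall>j. j \<notin> set vs \<longrightarrow> x j = cycle_context f vs j" by (simp add: x_def)
  have x_nth: "x (vs ! s) \<longleftrightarrow> Q s" if "s < k" for s
    using that k nth_eq_iff_index_eq[of vs] by (auto simp: x_def k_def)
  have "f x (vs ! y) = x (vs ! y)" if y: "y < k" for y
  proof -
    obtain t where t: "t < k" "(t + 1) mod k = y" using pred_mod_exists[OF y] by blast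
    have "f x (vs ! y) \<longleftrightarrow> (Q t \<longleftrightarrow> ss ! t)"
      using cycle_step[OF an cyc chl nd xo, of t] x_nth t by (simp add: k_def)
    also have "\<dots> \<longleftrightarrow> Q (Suc t)" using even_negatives_take_Suc[of t ss] t k by (simp add: Q_def)
    also have "\<dots> \<longleftrightarrow> Q y"
      using t k pos succ_mod_eq[of t k] by (auto simp: Q_def positive_cycle_def split: if_splits)
    also have "\<dots> \<longleftrightarrow> x (vs ! y)" using x_nth y by simp
    finally show ?thesis .
  qed
  then have "fixed_on f (set vs) x" by (auto simp: fixed_on_def in_set_conv_nth k_def)
  then show thesis using that xo by blast
qed

lemma cycle_fixpoint_pair:
  assumes an: "and_net f" and cyc: "is_cycle f vs ss" and chl: "chordless f vs"
    and nd: "\<forall>v. \<not> delocalizing f vs v"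
    and fx: "fixed_on f (set vs) x" and xo: "\<forall>j. j \<notin> set vs \<longrightarrow> x j = cycle_context f vs j"
  shows "fixpoint_pair f (set vs) x (\<lambda>j. if j \<in> set vs then \<not> x j else x j)"
proof -
  define x' where "x' = (\<lambda>j. if j \<in> set vs then \<not> x j else x j)"
  have xo': "\<forall>j. j \<notin> set vs \<longrightarrow> x' j = cycle_context f vs j" using xo by (simp add: x'_def)
  have "f x' i = x' i" if i: "i \<in> set vs" for i
  proof -
    obtain y where y: "y < length vs" "i = vs ! y" using i by (metis in_set_conv_nth)
    obtain t where t: "t < length vs" "(t + 1) mod length vs = y"
      using pred_mod_exists[OF y(1)] by blast
    have "f x' i \<longleftrightarrow> (x' (vs ! t) \<longleftrightarrow> ss ! t)" using cycle_step[OF an cyc chl nd xo' t(1)] t y by simp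
    also have "\<dots> \<longleftrightarrow> \<not> (x (vs ! t) \<longleftrightarrow> ss ! t)" using t by (auto simp: x'_def)
    also have "(x (vs ! t) \<longleftrightarrow> ss ! t) \<longleftrightarrow> f x i" using cycle_step[OF an cyc chl nd xo t(1)] t y by simp
    also have "f x i \<longleftrightarrow> x i" using fx i by (simp add: fixed_on_def)
    finally show ?thesis using i by (simp add: x'_def)
  qed
  moreover have "hd vs \<in> set vs" using cyc by (simp add: is_cycle_def)
  ultimately show ?thesis using fx unfolding fixpoint_pair_def fixed_on_def x'_def by fastforce
qed

lemma chordless_cycles_delocalized:
  assumes an: "and_net f"
    and exists: "\<forall>I z. I \<noteq> {} \<longrightarrow> (\<exists>y. y \<in> subnet_fixpoints f I z)"
    and no_pair: "\<forall>I x y. \<not> fixpoint_pair f I x y"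
  shows "\<forall>vs ss. is_cycle f vs ss \<and> chordless f vs \<longrightarrow> (\<exists>v. delocalizing f vs v)"
proof (intro allI impI)
  fix vs ss assume "is_cycle f vs ss \<and> chordless f vs"
  then have cyc: "is_cycle f vs ss" and chl: "chordless f vs" by blast+
  show "\<exists>v. delocalizing f vs v"
  proof (rule ccontr)
    assume "\<nexists>v. delocalizing f vs v"
    then have nd: "\<forall>v. \<not> delocalizing f vs v" by blast
    have "set vs \<noteq> {}" using cyc by (simp add: is_cycle_def)
    then obtain y where y: "y \<in> subnet_fixpoints f (set vs) (cycle_context f vs)" using exists by blast
    define x where "x = (\<lambda>j. if j \<in> set vs then y j else cycle_context f vs j)"
    have "fixed_on f (set vs) x" using y by (simp add: subnet_fixpoints_iff x_def)
    moreover have "\<forall>j. j \<notin> set vs \<longrightarrow> x j = cycle_context f vs j" by (simp add: x_def)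
    ultimately have "fixpoint_pair f (set vs) x (\<lambda>j. if j \<in> set vs then \<not> x j else x j)"
      by (rule cycle_fixpoint_pair[OF an cyc chl nd])
    then show False using no_pair by blast
  qed
qed

section \<open>Traps\<close>

definition justified :: "'v set \<Rightarrow> ('v \<Rightarrow> 'v \<Rightarrow> bool) \<Rightarrow> ('v \<Rightarrow> bool) \<Rightarrow> 'v set \<Rightarrow> 'v \<Rightarrow> bool" where
  "justified I E col S u \<longleftrightarrow> (if col u then \<forall>j\<in>I. E j u \<longrightarrow> j \<in> S else \<exists>j\<in>S. E j u)"

text \<open>When col is one of two fixed points that differ everywhere on I, it can be copied into the
  other on a trap while staying fixed there (trap_fixpoint_pair).\<close>
definition trap :: "'v set \<Rightarrow> ('v \<Rightarrow> 'v \<Rightarrow> bool) \<Rightarrow> ('v \<Rightarrow> bool) \<Rightarrow> 'v set \<Rightarrow> bool" where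
  "trap I E col R \<longleftrightarrow> (\<forall>r\<in>R. justified I E col R r)"

lemma justified_mono: "S \<subseteq> T \<Longrightarrow> justified I E col S u \<Longrightarrow> justified I E col T u"
  by (auto simp: justified_def split: if_splits)

lemma trap_cong: "(\<And>u. u \<in> R \<Longrightarrow> col u = col' u) \<Longrightarrow> trap I E col R \<longleftrightarrow> trap I E col' R"
  by (simp add: trap_def justified_def)

lemma trap_complement:
  assumes "\<forall>r\<in>I - S. \<not> justified I E col S r"
  shows "trap I E (\<lambda>u. \<not> col u) (I - S)"
  using assms by (auto simp: trap_def justified_def split: if_splits)

lemma unique_in_neighbour_if_no_proper_trap:
  assumes traps: "\<And>R. R \<subseteq> I \<Longrightarrow> R \<noteq> {} \<Longrightarrow> trap I E col R \<Longrightarrow> R = I"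
    and co_traps: "\<And>R. R \<subseteq> I \<Longrightarrow> R \<noteq> {} \<Longrightarrow> trap I E (\<lambda>u. \<not> col u) R \<Longrightarrow> R = I"
    and I: "a \<in> I" "b \<in> I" "c \<in> I" and a: "\<not> col a" and E: "E b a" "E c a"
  shows "b = c"
proof (rule ccontr)
  assume "b \<noteq> c"
  show False
  proof (cases "a \<in> {b, c}")
    case True
    then have "trap I E col {a}" using E a by (auto simp: trap_def justified_def)
    then have "{a} = I" using traps I by blast
    then show False using I \<open>b \<noteq> c\<close> by auto
  next
    case False
    text \<open>S is generated from a by justification, but never enters b or c.\<close>
    define S where "S = lfp (\<lambda>T. insert a {u \<in> I - {b, c}. justified I E col T u})"
    have "mono (\<lambda>T. insert a {u \<in> I - {b, c}. justified I E col T u})"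
      by (rule monoI) (auto intro: justified_mono)
    then have S: "S = insert a {u \<in> I - {b, c}. justified I E col S u}"
      unfolding S_def by (rule lfp_unfold)
    have unjustified: "\<not> justified I E col S d" if d: "d \<in> {b, c}" for d
    proof
      assume just: "justified I E col S d"
      have "trap I E col (insert d S)"
        unfolding trap_def
      proof
        fix r assume "r \<in> insert d S"
        then consider "r = a" | "r = d" | "justified I E col S r" using S by blast
        then show "justified I E col (insert d S) r"
        proof cases
          case 1
          then show ?thesis using a E d by (auto simp: justified_def)
        qed (use just in \<open>auto intro: justified_mono\<close>)
      qed
      moreover have "insert d S \<subseteq> I" using S I d by auto
      ultimately have "insert d S = I" using traps by blast
      moreover obtain d' where "d' \<in> {b, c}" "d' \<noteq> d" using \<open>b \<noteq> c\<close> d by auto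
      ultimately show False using S I False by auto
    qed
    have "trap I E (\<lambda>u. \<not> col u) (I - S)"
      using S unjustified by (intro trap_complement) blast
    moreover have "b \<in> I - S" using S False I by auto
    ultimately have "I - S = I" using co_traps by blast
    then show False using S I(1) by auto
  qed
qed

lemma trap_fixpoint_pair:
  assumes an: "and_net f" and fx: "fixed_on f R x" and fy: "fixed_on f R y"
    and out: "\<forall>j. j \<notin> I \<longrightarrow> x j = y j" and dif: "\<forall>i\<in>R. x i \<noteq> y i"
    and R: "R \<subseteq> I" "R \<noteq> {}" and tr: "trap I (any_arc f) y R"
  shows "fixpoint_pair f R x (\<lambda>j. if j \<in> R then y j else x j)"
proof -
  define m where "m = (\<lambda>j. if j \<in> R then y j else x j)"
  have "f m r = m r" if r: "r \<in> R" for r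
  proof (cases "y r")
    case True
    then have closed: "\<forall>j\<in>I. any_arc f j r \<longrightarrow> j \<in> R"
      using tr r by (simp add: trap_def justified_def)
    have "f m r = f y r"
      by (rule and_net_cong[OF an]) (use closed out R(1) in \<open>auto simp: m_def\<close>)
    then show ?thesis using fy r by (simp add: fixed_on_def m_def)
  next
    case False
    have "justified I (any_arc f) y R r" using tr r by (simp add: trap_def)
    then obtain j where j: "j \<in> R" "any_arc f j r" using False by (auto simp: justified_def)
    have "f x r" using fx dif r False by (auto simp: fixed_on_def)
    then have "(pos_arc f j r \<longrightarrow> x j) \<and> (neg_arc f j r \<longrightarrow> \<not> x j)" using and_net_eval[OF an] by blast
    moreover have "m j \<noteq> x j" using j dif by (simp add: m_def)
    ultimately have "\<not> f m r" using j(2) and_net_eval[OF an, of m r] by (auto simp: any_arc_def)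
    then show ?thesis using r False by (simp add: m_def)
  qed
  then show ?thesis using fx R dif unfolding fixpoint_pair_def fixed_on_def m_def by auto
qed

section \<open>At most one fixed point\<close>

lemma positive_cycle_if_fixpoints_differ:
  assumes an: "and_net f" and fx: "fixed_on f I x" and fy: "fixed_on f I y"
    and dif: "\<forall>i\<in>I. x i \<noteq> y i" and cyc: "is_cycle f vs ss" and sub: "set vs \<subseteq> I"
  shows "positive_cycle ss"
proof (rule positive_cycle_if_signs_follow_labelling[OF cyc])
  fix t assume t: "t < length vs"
  define i where "i = vs ! ((t + 1) mod length vs)"
  have "0 < length vs" using t by linarith
  then have "i \<in> set vs" "vs ! t \<in> set vs" using t by (simp_all add: i_def)
  then have ij: "i \<in> I" "vs ! t \<in> I" using sub by blast+
  have "f x i \<noteq> f y i" using fx fy dif ij(1) by (auto simp: fixed_on_def)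
  then have "(pos_arc f (vs ! t) i \<longrightarrow> x (vs ! t) = f x i) \<and> (neg_arc f (vs ! t) i \<longrightarrow> x (vs ! t) \<noteq> f x i)"
    using and_net_arc_sign[OF an] dif ij(2) by blast
  moreover have "sarc f (ss ! t) (vs ! t) i" using cyc t by (simp add: is_cycle_def i_def)
  moreover have "f x i = x i" using fx ij(1) by (simp add: fixed_on_def)
  ultimately show "ss ! t \<longleftrightarrow> (x (vs ! t) \<longleftrightarrow> x (vs ! ((t + 1) mod length vs)))"
    using and_net_not_pos_and_neg[OF an, of "vs ! t" i] unfolding i_def sarc_def
    by (cases "ss ! t") auto
qed

lemma unique_in_neighbour_if_minimal:
  fixes f :: "('v::finite \<Rightarrow> bool) \<Rightarrow> ('v \<Rightarrow> bool)"
  assumes an: "and_net f" and fx: "fixed_on f I x" and fy: "fixed_on f I y"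
    and out: "\<forall>j. j \<notin> I \<longrightarrow> x j = y j" and dif: "\<forall>i\<in>I. x i \<noteq> y i"
    and minimal: "\<And>J x' y'. J \<subset> I \<Longrightarrow> \<not> fixpoint_pair f J x' y'"
    and arcs: "i \<in> I" "j1 \<in> I" "j2 \<in> I" "any_arc f j1 i" "any_arc f j2 i"
  shows "j1 = j2"
proof -
  have no_proper_trap: "R = I"
    if R: "R \<subseteq> I" "R \<noteq> {}" and tr: "trap I (any_arc f) w R"
      and uw: "fixed_on f I u" "fixed_on f I w" "\<forall>j. j \<notin> I \<longrightarrow> u j = w j" "\<forall>i\<in>I. u i \<noteq> w i"
    for R u w
  proof (rule ccontr)
    assume "R \<noteq> I"
    then have "R \<subset> I" using R(1) by blast
    moreover have "fixpoint_pair f R u (\<lambda>j. if j \<in> R then w j else u j)"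
      using trap_fixpoint_pair[OF an fixed_on_subset[OF uw(1) R(1)] fixed_on_subset[OF uw(2) R(1)]
          uw(3) _ R tr] uw(4) R(1) by blast
    ultimately show False using minimal by blast
  qed
  have key: "j1 = j2"
    if uw: "fixed_on f I u" "fixed_on f I w" "\<forall>j. j \<notin> I \<longrightarrow> u j = w j" "\<forall>i\<in>I. u i \<noteq> w i"
      and "\<not> w i" for u w
  proof (rule unique_in_neighbour_if_no_proper_trap[of I "any_arc f" w i j1 j2])
    show "R = I" if "R \<subseteq> I" "R \<noteq> {}" "trap I (any_arc f) w R" for R
      using no_proper_trap[OF that uw] .
    show "R = I" if R: "R \<subseteq> I" "R \<noteq> {}" "trap I (any_arc f) (\<lambda>v. \<not> w v) R" for R
    proof -
      have "trap I (any_arc f) u R"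
        using R(3) trap_cong[of R "\<lambda>v. \<not> w v" u] R(1) uw(4) by blast
      then show ?thesis using no_proper_trap[OF R(1,2) _ uw(2,1)] uw(3,4) by auto
    qed
  qed (use arcs \<open>\<not> w i\<close> in auto)
  show ?thesis
  proof (cases "y i")
    case True
    have "\<forall>j. j \<notin> I \<longrightarrow> y j = x j" "\<forall>i\<in>I. y i \<noteq> x i" "\<not> x i" using out dif arcs(1) True by auto
    then show ?thesis by (rule key[OF fy fx])
  next
    case False
    then show ?thesis by (rule key[OF fx fy out dif])
  qed
qed

lemma minimal_fixpoint_pair_positive_cycle:
  fixes f :: "('v::finite \<Rightarrow> bool) \<Rightarrow> ('v \<Rightarrow> bool)"
  assumes an: "and_net f" and pair: "fixpoint_pair f I x y"
    and minimal: "\<And>J x' y'. J \<subset> I \<Longrightarrow> \<not> fixpoint_pair f J x' y'"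
  obtains vs ss where "is_cycle f vs ss" "positive_cycle ss" "chordless f vs" "\<forall>v. \<not> delocalizing f vs v"
proof -
  have fx: "fixed_on f I x" and fy: "fixed_on f I y" and out: "\<forall>j. j \<notin> I \<longrightarrow> x j = y j"
    and some_dif: "\<exists>i\<in>I. x i \<noteq> y i"
    using pair by (auto simp: fixpoint_pair_def)
  have dif: "\<forall>i\<in>I. x i \<noteq> y i"
  proof (rule ccontr)
    assume "\<not> (\<forall>i\<in>I. x i \<noteq> y i)"
    then have "{i \<in> I. x i \<noteq> y i} \<subset> I" by auto
    moreover have "fixpoint_pair f {i \<in> I. x i \<noteq> y i} x y"
      using fx fy out some_dif by (auto simp: fixpoint_pair_def fixed_on_def)
    ultimately show False using minimal by blast
  qed
  have f_dif: "f x i \<noteq> f y i" if "i \<in> I" for i using fx fy dif that by (auto simp: fixed_on_def)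
  have literal: "(pos_arc f w a \<longrightarrow> x w) \<and> (neg_arc f w a \<longrightarrow> \<not> x w)" if "w \<notin> I" "a \<in> I" for w a
  proof -
    have "f x a \<or> f y a" using f_dif that(2) by auto
    then show ?thesis using out that(1) and_net_eval[OF an, of x a] and_net_eval[OF an, of y a] by auto
  qed
  obtain vs ss where cyc: "is_cycle f vs ss" and chl: "chordless f vs" and sub: "set vs \<subseteq> I"
    and nd: "\<forall>v. \<not> delocalizing f vs v"
  proof (rule chordless_cycle_of_unique_in_neighbours[of I f])
    show "I \<noteq> {}" using some_dif by blast
    show "\<exists>j\<in>I. any_arc f j i" if "i \<in> I" for i
      using and_net_differ_in_neighbour[OF an f_dif[OF that]] out by blast
    show "j1 = j2" if "i \<in> I" "j1 \<in> I" "j2 \<in> I" "any_arc f j1 i" "any_arc f j2 i" for i j1 j2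
      using unique_in_neighbour_if_minimal[OF an fx fy out dif minimal that] .
    show False if "w \<notin> I" "a \<in> I" "b \<in> I" "pos_arc f w a" "neg_arc f w b" for w a b
      using literal[of w a] literal[of w b] that by blast
  qed
  then show thesis using that positive_cycle_if_fixpoints_differ[OF an fx fy dif] by blast
qed

lemma no_fixpoint_pair:
  fixes f :: "('v::finite \<Rightarrow> bool) \<Rightarrow> ('v \<Rightarrow> bool)"
  assumes an: "and_net f"
    and H: "\<forall>vs ss. is_cycle f vs ss \<and> positive_cycle ss \<and> chordless f vs \<longrightarrow> (\<exists>v. delocalizing f vs v)"
  shows "\<not> fixpoint_pair f I x y"
proof (induction "card I" arbitrary: I x y rule: less_induct)
  case less
  show ?case
  proof
    assume pair: "fixpoint_pair f I x y"
    have minimal: "\<not> fixpoint_pair f J x' y'" if "J \<subset> I" for J x' y'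
      using less psubset_card_mono[OF finite that] by blast
    obtain vs ss where "is_cycle f vs ss" "positive_cycle ss" "chordless f vs"
      "\<forall>v. \<not> delocalizing f vs v"
      using minimal_fixpoint_pair_positive_cycle[OF an pair minimal] by blast
    then show False using H by blast
  qed
qed

lemma no_fixpoint_pair_iff:
  fixes f :: "('v::finite \<Rightarrow> bool) \<Rightarrow> ('v \<Rightarrow> bool)"
  assumes an: "and_net f"
  shows "(\<forall>I x y. \<not> fixpoint_pair f I x y) \<longleftrightarrow>
    (\<forall>vs ss. is_cycle f vs ss \<and> positive_cycle ss \<and> chordless f vs \<longrightarrow> (\<exists>v. delocalizing f vs v))"
proof (intro iffI allI impI)
  fix vs ss
  assume no_pair: "\<forall>I x y. \<not> fixpoint_pair f I x y"
    and "is_cycle f vs ss \<and> positive_cycle ss \<and> chordless f vs"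
  then have cyc: "is_cycle f vs ss" and pos: "positive_cycle ss" and chl: "chordless f vs" by blast+
  show "\<exists>v. delocalizing f vs v"
  proof (rule ccontr)
    assume "\<nexists>v. delocalizing f vs v"
    then have nd: "\<forall>v. \<not> delocalizing f vs v" by blast
    obtain x where "fixed_on f (set vs) x" "\<forall>j. j \<notin> set vs \<longrightarrow> x j = cycle_context f vs j"
      using positive_cycle_fixpoint[OF an cyc chl nd pos] by blast
    then show False using cycle_fixpoint_pair[OF an cyc chl nd] no_pair by blast
  qed
qed (use no_fixpoint_pair[OF an] in blast)

section \<open>Existence of a fixed point\<close>

locale minimal_fixpoint_free_subnet =
  fixes f :: "('v::finite \<Rightarrow> bool) \<Rightarrow> ('v \<Rightarrow> bool)" and I :: "'v set" and z :: "'v \<Rightarrow> bool"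
  assumes and_net: "and_net f"
    and no_pair: "\<And>J x y. \<not> fixpoint_pair f J x y"
    and no_fixpoint: "\<And>x. fixed_on f I x \<Longrightarrow> \<forall>j. j \<notin> I \<longrightarrow> x j = z j \<Longrightarrow> False"
    and smaller: "\<And>J z'. J \<subset> I \<Longrightarrow> J \<noteq> {} \<Longrightarrow> \<exists>x. fixed_on f J x \<and> (\<forall>j. j \<notin> J \<longrightarrow> x j = z' j)"
begin

lemma fixed_except_at:
  assumes "v \<in> I"
  obtains x where "fixed_on f (I - {v}) x" "\<forall>j. j \<notin> I \<longrightarrow> x j = z j" "x v = \<beta>"
proof (cases "I - {v} = {}")
  case True
  show thesis by (rule that[of "z(v := \<beta>)"]) (use True assms in \<open>auto simp: fixed_on_def\<close>)
next
  case False
  then obtain x where x: "fixed_on f (I - {v}) x" "\<forall>j. j \<notin> I - {v} \<longrightarrow> x j = (z(v := \<beta>)) j"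
    using smaller[of "I - {v}" "z(v := \<beta>)"] assms by blast
  show thesis by (rule that[OF x(1)]) (use x(2) assms in auto)
qed

lemma moves_at:
  assumes "v \<in> I" "fixed_on f (I - {v}) x" "\<forall>j. j \<notin> I \<longrightarrow> x j = z j"
  shows "f x v \<noteq> x v"
proof
  assume "f x v = x v"
  then have "fixed_on f I x" using assms(2) by (auto simp: fixed_on_def)
  then show False using no_fixpoint assms(3) by blast
qed

lemma context_satisfies_arcs:
  assumes "i \<in> I" "j \<notin> I"
  shows "(pos_arc f j i \<longrightarrow> z j) \<and> (neg_arc f j i \<longrightarrow> \<not> z j)"
proof (rule ccontr)
  assume violated: "\<not> ?thesis"
  obtain x where x: "fixed_on f (I - {i}) x" "\<forall>j. j \<notin> I \<longrightarrow> x j = z j" "x i = False"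
    using fixed_except_at[OF assms(1), of False] by blast
  have "\<not> f x i" using violated x(2) assms(2) and_net_eval[OF and_net, of x i] by auto
  then show False using moves_at[OF assms(1) x(1,2)] x(3) by simp
qed

definition flip_pair :: "'v \<Rightarrow> ('v \<Rightarrow> bool) \<Rightarrow> ('v \<Rightarrow> bool) \<Rightarrow> bool" where
  "flip_pair v x y \<longleftrightarrow> fixed_on f (I - {v}) x \<and> fixed_on f (I - {v}) y \<and>
     (\<forall>j. j \<notin> I \<longrightarrow> x j = z j \<and> y j = z j) \<and> (\<forall>i\<in>I. x i \<noteq> y i) \<and> \<not> x v \<and> f x v \<and> \<not> f y v"

lemma flip_pair_exists:
  assumes v: "v \<in> I"
  obtains x y where "flip_pair v x y"
proof -
  obtain x where x: "fixed_on f (I - {v}) x" "\<forall>j. j \<notin> I \<longrightarrow> x j = z j" "x v = False"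
    using fixed_except_at[OF v, of False] by blast
  obtain y where y: "fixed_on f (I - {v}) y" "\<forall>j. j \<notin> I \<longrightarrow> y j = z j" "y v = True"
    using fixed_except_at[OF v, of True] by blast
  have moves: "f x v" "\<not> f y v" using moves_at[OF v x(1,2)] moves_at[OF v y(1,2)] x(3) y(3) by auto
  have "\<forall>i\<in>I. x i \<noteq> y i"
  proof (rule ccontr)
    assume "\<not> (\<forall>i\<in>I. x i \<noteq> y i)"
    define D where "D = {i \<in> I. x i \<noteq> y i}"
    have D: "D \<subset> I" "v \<in> D" using \<open>\<not> (\<forall>i\<in>I. x i \<noteq> y i)\<close> v x(3) y(3) by (auto simp: D_def)
    obtain w where w: "fixed_on f D w" "\<forall>j. j \<notin> D \<longrightarrow> w j = x j" using smaller[of D x] D by blast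
    text \<open>x and y agree outside D, so u agrees with w outside D - {v}.\<close>
    define u where "u = (if w v then y else x)"
    have u: "fixed_on f (I - {v}) u" "f u v \<noteq> u v" "u v = w v" "\<forall>j. j \<notin> D \<longrightarrow> u j = x j"
      using x y moves by (auto simp: u_def D_def)
    have "fixed_on f (D - {v}) w" "fixed_on f (D - {v}) u"
      using fixed_on_subset[OF w(1), of "D - {v}"] fixed_on_subset[OF u(1), of "D - {v}"] D(1) by auto
    moreover have outside: "\<forall>j. j \<notin> D - {v} \<longrightarrow> w j = u j" using w(2) u(3,4) by auto
    ultimately have "\<forall>i\<in>D - {v}. w i = u i" using no_pair[of "D - {v}" w u] unfolding fixpoint_pair_def by blast
    then have "w = u" using outside by (intro ext) (metis)
    then show False using w(1) u(2) D(2) by (simp add: fixed_on_def)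
  qed
  then show thesis by (intro that[of x y]) (use x y moves in \<open>auto simp: flip_pair_def\<close>)
qed

lemma flip_pair_neg_arc:
  assumes fp: "flip_pair v x y" and "i \<in> I" "j \<in> I" and arc: "any_arc f j i"
  shows "neg_arc f j i \<longleftrightarrow> ((x j \<noteq> x i) \<noteq> (i = v))"
proof -
  have fx_i: "f x i \<longleftrightarrow> (x i \<noteq> (i = v))" and "f x i \<noteq> f y i"
    using fp \<open>i \<in> I\<close> by (cases "i = v"; auto simp: flip_pair_def fixed_on_def)+
  moreover have "x j \<noteq> y j" using fp \<open>j \<in> I\<close> by (simp add: flip_pair_def)
  ultimately have "(pos_arc f j i \<longrightarrow> x j = f x i) \<and> (neg_arc f j i \<longrightarrow> x j \<noteq> f x i)"
    using and_net_arc_sign[OF and_net] by blast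
  then show ?thesis using fx_i arc and_net_not_pos_and_neg[OF and_net, of j i] by (auto simp: any_arc_def)
qed

lemma in_neighbour_exists:
  assumes "i \<in> I"
  shows "\<exists>j\<in>I. any_arc f j i"
proof -
  obtain x y where fp: "flip_pair i x y" using flip_pair_exists[OF assms] by blast
  then have "f x i \<noteq> f y i" by (simp add: flip_pair_def)
  then obtain j where "any_arc f j i" "x j \<noteq> y j" using and_net_differ_in_neighbour[OF and_net] by blast
  moreover from this(2) have "j \<in> I" using fp by (auto simp: flip_pair_def)
  ultimately show ?thesis by blast
qed

lemma no_in_closed_subset:
  assumes fp: "flip_pair v x y" and R: "R \<subseteq> I - {v}" "R \<noteq> {}"
    and closed: "\<forall>r\<in>R. \<forall>j\<in>I. any_arc f j r \<longrightarrow> j \<in> R"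
  shows False
proof -
  have fixed: "fixed_on f R x" "fixed_on f R y" using fp R(1) by (auto simp: flip_pair_def fixed_on_def)
  have "trap I (any_arc f) y R"
    unfolding trap_def justified_def
  proof
    fix r assume "r \<in> R"
    moreover obtain j where "j \<in> I" "any_arc f j r" using in_neighbour_exists \<open>r \<in> R\<close> R(1) by blast
    ultimately show "if y r then \<forall>j\<in>I. any_arc f j r \<longrightarrow> j \<in> R else \<exists>j\<in>R. any_arc f j r"
      using closed by auto
  qed
  moreover have "\<forall>j. j \<notin> I \<longrightarrow> x j = y j" "\<forall>i\<in>R. x i \<noteq> y i" "R \<subseteq> I"
    using fp R(1) by (auto simp: flip_pair_def)
  ultimately have "fixpoint_pair f R x (\<lambda>j. if j \<in> R then y j else x j)"
    using trap_fixpoint_pair[OF and_net fixed _ _ _ R(2)] by blast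
  then show False using no_pair by blast
qed

lemma flip_pairs_parity:
  assumes "flip_pair v x y" "flip_pair w x' y'" "i \<in> I" "j \<in> I" "any_arc f j i"
  shows "((x j \<noteq> x' j) \<noteq> (x i \<noteq> x' i)) \<longleftrightarrow> ((i = v) \<noteq> (i = w))"
  using flip_pair_neg_arc[OF assms(1,3-5)] flip_pair_neg_arc[OF assms(2-5)] by auto

lemma flip_pairs_separate:
  assumes v: "v \<in> I" and fv: "flip_pair v x y" and fw: "flip_pair w x' y'" and "v \<noteq> w"
  shows "(x v \<noteq> x' v) \<noteq> (x w \<noteq> x' w)"
proof
  assume same: "(x v \<noteq> x' v) = (x w \<noteq> x' w)"
  define R where "R = {u \<in> I. (x u \<noteq> x' u) \<noteq> (x v \<noteq> x' v)}"
  have "\<forall>r\<in>R. \<forall>j\<in>I. any_arc f j r \<longrightarrow> j \<in> R"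
  proof (intro ballI impI)
    fix r j assume r: "r \<in> R" and "j \<in> I" "any_arc f j r"
    moreover have "r \<noteq> v" "r \<noteq> w" using r same by (auto simp: R_def)
    ultimately show "j \<in> R" using flip_pairs_parity[OF fv fw, of r j] by (auto simp: R_def)
  qed
  moreover have "R \<subseteq> I - {v}" by (auto simp: R_def)
  ultimately have "R = {}" using no_in_closed_subset[OF fv] by blast
  moreover obtain j where "j \<in> I" "any_arc f j v" using in_neighbour_exists v by blast
  ultimately show False using flip_pairs_parity[OF fv fw v, of j] \<open>v \<noteq> w\<close> by (auto simp: R_def)
qed

lemma unique_in_neighbour:
  assumes i: "i \<in> I" and j: "j1 \<in> I" "j2 \<in> I" and arcs: "any_arc f j1 i" "any_arc f j2 i"
  shows "j1 = j2"
proof (rule ccontr)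
  assume "j1 \<noteq> j2"
  show False
  proof (cases "i \<in> {j1, j2}")
    case True
    then obtain w where w: "w \<in> I" "w \<noteq> i" using j \<open>j1 \<noteq> j2\<close> by blast
    obtain x y where fi: "flip_pair i x y" using flip_pair_exists[OF i] by blast
    obtain x' y' where fw: "flip_pair w x' y'" using flip_pair_exists[OF w(1)] by blast
    have "any_arc f i i" using True arcs by auto
    then show False using flip_pairs_parity[OF fi fw i i] w(2) by simp
  next
    case False
    obtain x1 y1 where f1: "flip_pair j1 x1 y1" using flip_pair_exists[OF j(1)] by blast
    obtain x2 y2 where f2: "flip_pair j2 x2 y2" using flip_pair_exists[OF j(2)] by blast
    have "(x1 j1 \<noteq> x2 j1) = (x1 j2 \<noteq> x2 j2)"
      using flip_pairs_parity[OF f1 f2 i j(1) arcs(1)] flip_pairs_parity[OF f1 f2 i j(2) arcs(2)] False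
      by auto
    then show False using flip_pairs_separate[OF j(1) f1 f2 \<open>j1 \<noteq> j2\<close>] by simp
  qed
qed

lemma undelocalized_chordless_cycle:
  assumes "I \<noteq> {}"
  obtains vs ss where "is_cycle f vs ss" "chordless f vs" "\<forall>v. \<not> delocalizing f vs v"
proof (rule chordless_cycle_of_unique_in_neighbours[of I f])
  show "False" if "w \<notin> I" "a \<in> I" "b \<in> I" "pos_arc f w a" "neg_arc f w b" for w a b
    using context_satisfies_arcs[of a w] context_satisfies_arcs[of b w] that by blast
qed (use assms in_neighbour_exists unique_in_neighbour that in blast)+

end

lemma fixpoint_exists:
  fixes f :: "('v::finite \<Rightarrow> bool) \<Rightarrow> ('v \<Rightarrow> bool)"
  assumes an: "and_net f"
    and H: "\<forall>vs ss. is_cycle f vs ss \<and> chordless f vs \<longrightarrow> (\<exists>v. delocalizing f vs v)"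
  shows "I \<noteq> {} \<Longrightarrow> \<exists>x. fixed_on f I x \<and> (\<forall>j. j \<notin> I \<longrightarrow> x j = z j)"
proof (induction "card I" arbitrary: I z rule: less_induct)
  case less
  show ?case
  proof (rule ccontr)
    assume none: "\<nexists>x. fixed_on f I x \<and> (\<forall>j. j \<notin> I \<longrightarrow> x j = z j)"
    interpret minimal_fixpoint_free_subnet f I z
    proof unfold_locales
      show "and_net f" by (rule an)
      have "\<forall>vs ss. is_cycle f vs ss \<and> positive_cycle ss \<and> chordless f vs \<longrightarrow> (\<exists>v. delocalizing f vs v)"
        using H by blast
      then show "\<not> fixpoint_pair f J x y" for J x y by (rule no_fixpoint_pair[OF an])
      show False if "fixed_on f I x" "\<forall>j. j \<notin> I \<longrightarrow> x j = z j" for x using none that by blast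
      show "\<exists>x. fixed_on f J x \<and> (\<forall>j. j \<notin> J \<longrightarrow> x j = z' j)" if "J \<subset> I" "J \<noteq> {}" for J z'
        using less psubset_card_mono[OF finite that(1)] that(2) by blast
    qed
    obtain vs ss where "is_cycle f vs ss" "chordless f vs" "\<forall>v. \<not> delocalizing f vs v"
      using undelocalized_chordless_cycle[OF less.prems] by blast
    then show False using H by blast
  qed
qed

lemma subnet_fixpoint_exists:
  fixes f :: "('v::finite \<Rightarrow> bool) \<Rightarrow> ('v \<Rightarrow> bool)"
  assumes an: "and_net f"
    and H: "\<forall>vs ss. is_cycle f vs ss \<and> chordless f vs \<longrightarrow> (\<exists>v. delocalizing f vs v)"
  shows "\<forall>I z. I \<noteq> {} \<longrightarrow> (\<exists>y. y \<in> subnet_fixpoints f I z)"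
proof (intro allI impI)
  fix I :: "'v set" and z assume "I \<noteq> {}"
  then obtain x where "fixed_on f I x" "\<forall>j. j \<notin> I \<longrightarrow> x j = z j"
    using fixpoint_exists[OF an H] by blast
  then show "\<exists>y. y \<in> subnet_fixpoints f I z" by (blast intro: restrict_in_subnet_fixpoints)
qed

theorem corollary12:
  fixes f :: "('v::finite \<Rightarrow> bool) \<Rightarrow> ('v \<Rightarrow> bool)"
  assumes "and_net f"
  shows "((\<forall>I z. I \<noteq> {} \<longrightarrow> (\<exists>!y. y \<in> subnet_fixpoints f I z)) \<longleftrightarrow>
           (\<forall>vs ss. is_cycle f vs ss \<and> chordless f vs \<longrightarrow> (\<exists>v. delocalizing f vs v)))
       \<and> ((\<forall>I z. I \<noteq> {} \<longrightarrow>
              (\<forall>y1 \<in> subnet_fixpoints f I z. \<forall>y2 \<in> subnet_fixpoints f I z. y1 = y2)) \<longleftrightarrow>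
           (\<forall>vs ss. is_cycle f vs ss \<and> positive_cycle ss \<and> chordless f vs
                     \<longrightarrow> (\<exists>v. delocalizing f vs v)))"
    (is "(?unique \<longleftrightarrow> ?cycles) \<and> (?at_most_one \<longleftrightarrow> ?positive_cycles)")
proof -
  let ?exists = "\<forall>I z. I \<noteq> {} \<longrightarrow> (\<exists>y. y \<in> subnet_fixpoints f I z)"
  have at_most_one: "?at_most_one \<longleftrightarrow> (\<forall>I x y. \<not> fixpoint_pair f I x y)"
    by (rule at_most_one_subnet_fixpoint_iff_no_pair)
  have positive: "?at_most_one \<longleftrightarrow> ?positive_cycles"
    using at_most_one no_fixpoint_pair_iff[OF assms] by (rule trans)
  have ex1: "(\<exists>!y. y \<in> S) \<longleftrightarrow> (\<exists>y. y \<in> S) \<and> (\<forall>y1\<in>S. \<forall>y2\<in>S. y1 = y2)" for S :: "('v \<Rightarrow> bool) set"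
    by blast
  have unique: "?unique \<longleftrightarrow> ?exists \<and> ?at_most_one"
    unfolding ex1 by (simp only: imp_conjR all_conj_distrib)
  have "?unique \<longleftrightarrow> ?cycles"
  proof
    assume ?unique
    then have ?exists ?at_most_one using unique by simp_all
    then show ?cycles using chordless_cycles_delocalized[OF assms] at_most_one by simp
  next
    assume ?cycles
    then have ?positive_cycles by blast
    then show ?unique using unique subnet_fixpoint_exists[OF assms \<open>?cycles\<close>] positive by simp
  qed
  then show ?thesis using positive by simp
qed

end
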